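(* Let $d\geq1$, fix $p_\rho\geq 0$, and let $\hat\rho$ be a $d\times d$ density operator with eigenvalue decomposition $\hat\rho=\sum_{i=1}^d\hat r_i|b_i\rangle\!\langle b_i|$ ($\{b_i\}$ an orthonormal basis). Consider (P1) maximize $\mathrm{Tr}(\hat\rho\sigma)+p_\rho\sqrt{1-\mathrm{Tr}(\sigma^2)}$ over $\sigma\in L(\mathbb C^d)$ subject to $\sigma\geq0$, $\mathrm{Tr}(\sigma)=1$; and (P2) maximize $\sum_{i=1}^d\hat r_is_i+p_\rho\sqrt{1-\sum_{i=1}^ds_i^2}$ over $(s_1,\dots,s_d)\in\mathbb R^d$ subject to $\sum_i s_i=1$, $s_i\geq0$ for all $i$. Then (P1) and (P2) are equivalent: they have the same optimal value, the map $(s_1,\dots,s_d)\mapsto\tilde\sigma=\sum_{i=1}^ds_i|b_i\rangle\!\langle b_i|$ is a one-to-one correspondence between feasible arrays of (P2) and density operators diagonal in the basis $\{b_i\}$, preserving objective values, and for every feasible $\sigma$ of (P1) there is such a $\tilde\sigma$ with objective value at least that of $\sigma$. *)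

theory Defs
  imports "HOL-Analysis.Analysis"
begin

text \<open>Operators on C^d are represented as complex d x d matrices, with d = CARD('n).\<close>

definition cinner :: "complex^'n \<Rightarrow> complex^'n \<Rightarrow> complex" where
  "cinner x y = (\<Sum>i\<in>UNIV. cnj (x $ i) * y $ i)"

definition psd :: "complex^'n^'n \<Rightarrow> bool" where
  "psd A \<longleftrightarrow> (\<forall>x. cinner x (A *v x) \<in> \<real> \<and> 0 \<le> Re (cinner x (A *v x)))"

definition density_op :: "complex^'n^'n \<Rightarrow> bool" where
  "density_op A \<longleftrightarrow> psd A \<and> trace A = 1"

definition outer :: "complex^'n \<Rightarrow> complex^'n \<Rightarrow> complex^'n^'n" where
  "outer u v = (\<chi> i j. u $ i * cnj (v $ j))"

definition orthonormal_basis :: "('n \<Rightarrow> complex^'n) \<Rightarrow> bool" where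
  "orthonormal_basis b \<longleftrightarrow> (\<forall>i j. cinner (b i) (b j) = (if i = j then 1 else 0))"

definition diag_in_basis :: "('n \<Rightarrow> complex^'n) \<Rightarrow> complex^'n^'n \<Rightarrow> bool" where
  "diag_in_basis b A \<longleftrightarrow> (\<forall>i j. i \<noteq> j \<longrightarrow> cinner (b i) (A *v b j) = 0)"

definition obj1 :: "complex^'n^'n \<Rightarrow> real \<Rightarrow> complex^'n^'n \<Rightarrow> real" where
  "obj1 \<rho> p \<sigma> = Re (trace (\<rho> ** \<sigma>)) + p * sqrt (1 - Re (trace (\<sigma> ** \<sigma>)))"

definition obj2 :: "('n \<Rightarrow> real) \<Rightarrow> real \<Rightarrow> ('n \<Rightarrow> real) \<Rightarrow> real" where
  "obj2 r p s = (\<Sum>i\<in>UNIV. r i * s i) + p * sqrt (1 - (\<Sum>i\<in>UNIV. (s i)\<^sup>2))"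

definition feasible2 :: "('n::finite \<Rightarrow> real) set" where
  "feasible2 = {s. (\<Sum>i\<in>UNIV. s i) = 1 \<and> (\<forall>i. 0 \<le> s i)}"

definition diag_op :: "('n \<Rightarrow> complex^'n) \<Rightarrow> ('n \<Rightarrow> real) \<Rightarrow> complex^'n^'n" where
  "diag_op b s = (\<Sum>i\<in>UNIV. s i *\<^sub>R outer (b i) (b i))"

end

theory Submission
  imports Defs
begin

text \<open>
  Let \<open>U\<close> be the unitary matrix whose columns are the \<open>b i\<close> and write every operator \<open>A\<close>
  in this basis as \<open>U\<^sup>* A U\<close>. This change of basis preserves positivity, traces and
  \<open>Tr (A B)\<close>, so it preserves both feasibility and the objective of (P1), and it turns \<open>\<rho>\<close>
  into the real diagonal matrix with entries \<open>r i\<close>. Replacing a feasible \<open>M\<close> by its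
  diagonal part (pinching) keeps it a density matrix and keeps \<open>Tr (\<rho> M)\<close>, while
  \<open>Tr (M\<^sup>2) = \<Sum>\<^sub>i\<^sub>j |M\<^sub>i\<^sub>j|\<^sup>2\<close> can only drop; as \<open>p \<ge> 0\<close> the objective can only grow. Diagonal
  density matrices are exactly the probability vectors \<open>s\<close>, and on them the objective of
  (P1) is that of (P2).
\<close>

definition cnj_transpose :: "complex^'n^'m \<Rightarrow> complex^'m^'n" where
  "cnj_transpose A = (\<chi> i j. cnj (A $ j $ i))"

definition basis_matrix :: "('n \<Rightarrow> complex^'n) \<Rightarrow> complex^'n^'n" where
  "basis_matrix b = (\<chi> k i. b i $ k)"

definition matrix_in_basis :: "('n \<Rightarrow> complex^'n) \<Rightarrow> complex^'n^'n \<Rightarrow> complex^'n^'n" where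
  "matrix_in_basis b A = cnj_transpose (basis_matrix b) ** A ** basis_matrix b"

definition real_diag_matrix :: "('n::finite \<Rightarrow> real) \<Rightarrow> complex^'n^'n" where
  "real_diag_matrix s = (\<chi> i j. if i = j then complex_of_real (s i) else 0)"

lemma cnj_transpose_cnj_transpose [simp]: "cnj_transpose (cnj_transpose A) = A"
  by (simp add: cnj_transpose_def vec_eq_iff)

lemma cinner_matrix_vector_mult: "cinner x (A *v y) = cinner (cnj_transpose A *v x) y"
  unfolding cinner_def cnj_transpose_def matrix_vector_mult_def
  by (simp add: sum_distrib_left sum_distrib_right, subst sum.swap) (simp add: mult_ac)

lemma psd_congruence:
  assumes "psd A" shows "psd (cnj_transpose W ** A ** W)"
proof -
  have "cinner x ((cnj_transpose W ** A ** W) *v x) = cinner (W *v x) (A *v (W *v x))" for x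
    by (simp add: cinner_matrix_vector_mult flip: matrix_vector_mul_assoc)
  then show ?thesis using assms by (simp add: psd_def)
qed

lemma cinner_axis_axis: "cinner (axis i 1) (A *v axis i 1) = A $ i $ i"
  by (simp add: cinner_def matrix_vector_mult_def axis_def if_distrib if_distribR sum.If_cases)

lemma cinner_axis_sum:
  assumes "i \<noteq> j"
  shows "cinner (axis i a + axis j c) (A *v (axis i a + axis j c)) =
    cnj a * a * A$i$i + cnj a * c * A$i$j + cnj c * a * A$j$i + cnj c * c * A$j$j"
  using assms
  by (simp add: cinner_def matrix_vector_mult_def axis_def if_distrib if_distribR sum.If_cases
        sum.distrib algebra_simps)

lemma psd_diag_entry: "psd A \<Longrightarrow> A$i$i \<in> \<real> \<and> 0 \<le> Re (A$i$i)"
  unfolding psd_def by (metis cinner_axis_axis)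

lemma psd_of_real_Re_diag_entry: "psd A \<Longrightarrow> complex_of_real (Re (A$i$i)) = A$i$i"
  using psd_diag_entry complex_is_Real_iff by (metis complex_eq_iff Im_complex_of_real Re_complex_of_real)

text \<open>Testing the quadratic form on \<open>e\<^sub>i + e\<^sub>j\<close> and \<open>e\<^sub>i + \<i> e\<^sub>j\<close> recovers the imaginary and the real part of
  \<open>A\<^sub>i\<^sub>j - cnj A\<^sub>j\<^sub>i\<close>.\<close>

lemma psd_hermitian:
  assumes "psd A" shows "A$j$i = cnj (A$i$j)"
proof (cases "i = j")
  case True
  then show ?thesis using psd_diag_entry[OF assms, of i] by (metis Reals_cnj_iff)
next
  case False
  have diag_real: "Im (A$i$i) = 0" "Im (A$j$j) = 0"
    using psd_diag_entry[OF assms] complex_is_Real_iff by auto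
  have "cinner (axis i 1 + axis j 1) (A *v (axis i 1 + axis j 1)) \<in> \<real>"
    using assms psd_def by blast
  hence im: "Im (A$i$j) + Im (A$j$i) = 0"
    using cinner_axis_sum[OF False, of 1 1 A] diag_real by (simp add: complex_is_Real_iff)
  have "cinner (axis i 1 + axis j \<i>) (A *v (axis i 1 + axis j \<i>)) \<in> \<real>"
    using assms psd_def by blast
  hence re: "Re (A$i$j) - Re (A$j$i) = 0"
    using cinner_axis_sum[OF False, of 1 \<i> A] diag_real by (simp add: complex_is_Real_iff)
  show ?thesis using im re by (simp add: complex_eq_iff)
qed

lemma Re_trace_square_psd:
  assumes "psd A"
  shows "Re (trace (A ** A)) = (\<Sum>i\<in>UNIV. \<Sum>j\<in>UNIV. (cmod (A$i$j))\<^sup>2)"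
proof -
  have "Re (A$i$j * A$j$i) = (cmod (A$i$j))\<^sup>2" for i j
    using psd_hermitian[OF assms, of i j] cmod_power2[of "A$i$j"] by (simp add: power2_eq_square)
  then show ?thesis by (simp add: trace_def matrix_matrix_mult_def)
qed

lemma sum_diag_square_le_trace_square:
  assumes "psd A"
  shows "(\<Sum>i\<in>UNIV. (Re (A$i$i))\<^sup>2) \<le> Re (trace (A ** A))"
proof -
  have "(Re (A$i$i))\<^sup>2 = (cmod (A$i$i))\<^sup>2" for i
    using psd_of_real_Re_diag_entry[OF assms, of i] by (metis norm_of_real power2_abs)
  then have "(\<Sum>i\<in>UNIV. (Re (A$i$i))\<^sup>2) = (\<Sum>i\<in>UNIV. (cmod (A$i$i))\<^sup>2)"
    by simp
  also have "\<dots> \<le> (\<Sum>i\<in>UNIV. \<Sum>j\<in>UNIV. (cmod (A$i$j))\<^sup>2)"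
    by (intro sum_mono member_le_sum) auto
  finally show ?thesis by (simp add: Re_trace_square_psd[OF assms])
qed

lemma trace_real_diag_matrix_mult:
  "trace (real_diag_matrix r ** A) = (\<Sum>i\<in>UNIV. complex_of_real (r i) * A$i$i)"
  by (simp add: real_diag_matrix_def trace_def matrix_matrix_mult_def if_distrib if_distribR sum.If_cases)

lemma Re_trace_real_diag_matrix_mult:
  "Re (trace (real_diag_matrix r ** A)) = (\<Sum>i\<in>UNIV. r i * Re (A$i$i))"
  by (simp add: trace_real_diag_matrix_mult)

lemma real_diag_matrix_diag_entry [simp]: "real_diag_matrix s $ i $ i = complex_of_real (s i)"
  by (simp add: real_diag_matrix_def)

lemma trace_real_diag_matrix: "trace (real_diag_matrix s) = complex_of_real (\<Sum>i\<in>UNIV. s i)"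
  by (simp add: real_diag_matrix_def trace_def)

lemma psd_real_diag_matrix_iff: "psd (real_diag_matrix s) \<longleftrightarrow> (\<forall>i. 0 \<le> s i)"
proof
  assume "psd (real_diag_matrix s)"
  then show "\<forall>i. 0 \<le> s i"
    using psd_diag_entry by (fastforce simp: real_diag_matrix_def)
next
  assume nonneg: "\<forall>i. 0 \<le> s i"
  have "cinner x (real_diag_matrix s *v x) = complex_of_real (\<Sum>i\<in>UNIV. s i * (cmod (x$i))\<^sup>2)" for x
    by (simp add: cinner_def real_diag_matrix_def matrix_vector_mult_def if_distrib if_distribR
        sum.If_cases del: of_real_power)
       (intro sum.cong refl, subst complex_norm_square, simp add: mult_ac)
  then show "psd (real_diag_matrix s)"
    unfolding psd_def using nonneg by (auto intro: sum_nonneg)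
qed

lemma density_op_real_diag_matrix_iff: "density_op (real_diag_matrix s) \<longleftrightarrow> s \<in> feasible2"
  by (simp add: density_op_def feasible2_def psd_real_diag_matrix_iff trace_real_diag_matrix
      conj_commute del: of_real_sum)

lemma psd_diagonal_eq_real_diag_matrix:
  assumes "psd A" and "\<And>i j. i \<noteq> j \<Longrightarrow> A$i$j = 0"
  shows "A = real_diag_matrix (\<lambda>i. Re (A$i$i))"
  using assms psd_of_real_Re_diag_entry[OF assms(1)] by (auto simp: vec_eq_iff real_diag_matrix_def)

lemma obj1_real_diag_matrix: "obj1 (real_diag_matrix r) p (real_diag_matrix s) = obj2 r p s"
  by (simp add: obj1_def obj2_def Re_trace_real_diag_matrix_mult power2_eq_square)

lemma Re_diag_in_feasible2: "density_op A \<Longrightarrow> (\<lambda>i. Re (A$i$i)) \<in> feasible2"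
  by (simp add: density_op_def feasible2_def psd_diag_entry trace_def flip: Re_sum)

lemma obj1_real_diag_matrix_le_obj2_diag:
  assumes "psd A" and "0 \<le> p"
  shows "obj1 (real_diag_matrix r) p A \<le> obj2 r p (\<lambda>i. Re (A$i$i))"
proof -
  have "sqrt (1 - Re (trace (A ** A))) \<le> sqrt (1 - (\<Sum>i\<in>UNIV. (Re (A$i$i))\<^sup>2))"
    using sum_diag_square_le_trace_square[OF assms(1)] by simp
  then show ?thesis
    using assms(2) by (simp add: obj1_def obj2_def Re_trace_real_diag_matrix_mult mult_left_mono)
qed

lemma cinner_eq_matrix_in_basis: "cinner (b i) (A *v b j) = matrix_in_basis b A $ i $ j"
  unfolding cinner_def matrix_in_basis_def cnj_transpose_def basis_matrix_def
    matrix_matrix_mult_def matrix_vector_mult_def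
  by (simp add: sum_distrib_left sum_distrib_right mult_ac, subst sum.swap) simp

lemma diag_in_basis_iff: "diag_in_basis b A \<longleftrightarrow> (\<forall>i j. i \<noteq> j \<longrightarrow> matrix_in_basis b A $ i $ j = 0)"
  by (simp add: diag_in_basis_def cinner_eq_matrix_in_basis)

lemma diag_op_conv_basis_matrix:
  "diag_op b s = basis_matrix b ** real_diag_matrix s ** cnj_transpose (basis_matrix b)"
  unfolding diag_op_def basis_matrix_def real_diag_matrix_def cnj_transpose_def outer_def
    matrix_matrix_mult_def
  by (simp add: vec_eq_iff,
      simp add: if_distrib if_distribR sum.If_cases scaleR_conv_of_real mult_ac)

context
  fixes b :: "'n::finite \<Rightarrow> complex^'n"
  assumes orthonormal: "orthonormal_basis b"
begin

lemma cnj_transpose_basis_matrix_mult: "cnj_transpose (basis_matrix b) ** basis_matrix b = mat 1"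
  using orthonormal unfolding orthonormal_basis_def
  by (simp add: vec_eq_iff cnj_transpose_def basis_matrix_def matrix_matrix_mult_def mat_def cinner_def)

lemma basis_matrix_mult_cnj_transpose: "basis_matrix b ** cnj_transpose (basis_matrix b) = mat 1"
  using cnj_transpose_basis_matrix_mult matrix_left_right_inverse by blast

lemma matrix_in_basis_inverse:
  "basis_matrix b ** matrix_in_basis b A ** cnj_transpose (basis_matrix b) = A"
proof -
  have "basis_matrix b ** matrix_in_basis b A ** cnj_transpose (basis_matrix b) =
      (basis_matrix b ** cnj_transpose (basis_matrix b)) ** A **
      (basis_matrix b ** cnj_transpose (basis_matrix b))"
    by (simp add: matrix_in_basis_def matrix_mul_assoc)
  then show ?thesis by (simp add: basis_matrix_mult_cnj_transpose)
qed

lemma matrix_in_basis_mult: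
  "matrix_in_basis b A ** matrix_in_basis b B = matrix_in_basis b (A ** B)"
proof -
  have "matrix_in_basis b A ** matrix_in_basis b B =
      cnj_transpose (basis_matrix b) ** A **
      (basis_matrix b ** cnj_transpose (basis_matrix b)) ** B ** basis_matrix b"
    by (simp add: matrix_in_basis_def matrix_mul_assoc)
  then show ?thesis
    by (simp add: basis_matrix_mult_cnj_transpose matrix_in_basis_def matrix_mul_assoc)
qed

lemma trace_matrix_in_basis: "trace (matrix_in_basis b A) = trace A"
proof -
  have "trace (matrix_in_basis b A) =
      trace (A ** (basis_matrix b ** cnj_transpose (basis_matrix b)))"
    unfolding matrix_in_basis_def by (metis trace_mul_sym matrix_mul_assoc)
  then show ?thesis by (simp add: basis_matrix_mult_cnj_transpose)
qed

lemma psd_matrix_in_basis_iff: "psd (matrix_in_basis b A) \<longleftrightarrow> psd A"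
  by (metis psd_congruence matrix_in_basis_def matrix_in_basis_inverse cnj_transpose_cnj_transpose)

lemma density_op_matrix_in_basis_iff: "density_op (matrix_in_basis b A) \<longleftrightarrow> density_op A"
  by (simp add: density_op_def psd_matrix_in_basis_iff trace_matrix_in_basis)

lemma obj1_matrix_in_basis:
  "obj1 (matrix_in_basis b \<rho>) p (matrix_in_basis b \<sigma>) = obj1 \<rho> p \<sigma>"
  by (simp add: obj1_def matrix_in_basis_mult trace_matrix_in_basis)

lemma matrix_in_basis_diag_op: "matrix_in_basis b (diag_op b s) = real_diag_matrix s"
proof -
  have "matrix_in_basis b (diag_op b s) =
      (cnj_transpose (basis_matrix b) ** basis_matrix b) ** real_diag_matrix s **
      (cnj_transpose (basis_matrix b) ** basis_matrix b)"
    by (simp add: matrix_in_basis_def diag_op_conv_basis_matrix matrix_mul_assoc)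
  then show ?thesis by (simp add: cnj_transpose_basis_matrix_mult)
qed

lemma matrix_in_basis_eq_real_diag_matrix_iff:
  "matrix_in_basis b A = real_diag_matrix s \<longleftrightarrow> A = diag_op b s"
  by (metis matrix_in_basis_diag_op matrix_in_basis_inverse)

lemma obj1_diag_op: "obj1 (diag_op b r) p (diag_op b s) = obj2 r p s"
  by (metis obj1_matrix_in_basis matrix_in_basis_diag_op obj1_real_diag_matrix)

lemma bij_betw_diag_op:
  "bij_betw (diag_op b) feasible2 {\<sigma>. density_op \<sigma> \<and> diag_in_basis b \<sigma>}"
proof (rule bij_betw_imageI)
  show "inj_on (diag_op b) feasible2"
  proof (rule inj_onI)
    fix s t assume "diag_op b s = diag_op b t"
    then have "real_diag_matrix s = real_diag_matrix t" by (metis matrix_in_basis_diag_op)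
    then show "s = t" by (metis ext of_real_eq_iff real_diag_matrix_diag_entry)
  qed
  show "diag_op b ` feasible2 = {\<sigma>. density_op \<sigma> \<and> diag_in_basis b \<sigma>}"
  proof (intro equalityI subsetI)
    fix \<sigma> assume "\<sigma> \<in> diag_op b ` feasible2"
    then obtain s where "s \<in> feasible2" and \<sigma>: "\<sigma> = diag_op b s" by blast
    then have "density_op (matrix_in_basis b \<sigma>)"
      by (simp add: matrix_in_basis_diag_op density_op_real_diag_matrix_iff)
    moreover have "diag_in_basis b \<sigma>"
      by (simp add: \<sigma> diag_in_basis_iff matrix_in_basis_diag_op real_diag_matrix_def)
    ultimately show "\<sigma> \<in> {\<sigma>. density_op \<sigma> \<and> diag_in_basis b \<sigma>}"
      by (simp add: density_op_matrix_in_basis_iff)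
  next
    fix \<sigma> assume "\<sigma> \<in> {\<sigma>. density_op \<sigma> \<and> diag_in_basis b \<sigma>}"
    then have density: "density_op (matrix_in_basis b \<sigma>)"
      and diagonal: "diag_in_basis b \<sigma>"
      by (simp_all add: density_op_matrix_in_basis_iff)
    define s where "s = (\<lambda>i. Re (matrix_in_basis b \<sigma> $ i $ i))"
    have "matrix_in_basis b \<sigma> = real_diag_matrix s"
      unfolding s_def using density diagonal
      by (intro psd_diagonal_eq_real_diag_matrix) (auto simp: density_op_def diag_in_basis_iff)
    then have "\<sigma> = diag_op b s" by (simp add: matrix_in_basis_eq_real_diag_matrix_iff)
    moreover have "s \<in> feasible2"
      unfolding s_def by (rule Re_diag_in_feasible2[OF density])
    ultimately show "\<sigma> \<in> diag_op b ` feasible2" by blast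
  qed
qed

lemma obj1_diag_op_dominates:
  assumes "density_op \<sigma>" and "0 \<le> p"
  shows "\<exists>s\<in>feasible2. obj1 (diag_op b r) p \<sigma> \<le> obj2 r p s"
proof -
  let ?M = "matrix_in_basis b \<sigma>"
  have "density_op ?M"
    using assms(1) by (simp add: density_op_matrix_in_basis_iff)
  then have "(\<lambda>i. Re (?M$i$i)) \<in> feasible2"
    and "obj1 (real_diag_matrix r) p ?M \<le> obj2 r p (\<lambda>i. Re (?M$i$i))"
    using Re_diag_in_feasible2 obj1_real_diag_matrix_le_obj2_diag assms(2)
    by (auto simp: density_op_def)
  then show ?thesis
    by (metis matrix_in_basis_diag_op obj1_matrix_in_basis)
qed

end

lemma cSUP_eq_if_dominated:
  fixes f :: "'a \<Rightarrow> 'c::conditionally_complete_lattice"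
  assumes embed: "g ` B \<subseteq> A" and agree: "\<And>y. y \<in> B \<Longrightarrow> f (g y) = h y"
    and dominated: "\<And>x. x \<in> A \<Longrightarrow> \<exists>y\<in>B. f x \<le> h y"
    and "B \<noteq> {}" and bounded: "bdd_above (h ` B)"
  shows "(SUP x\<in>A. f x) = (SUP y\<in>B. h y)"
proof (rule antisym)
  have "A \<noteq> {}" using embed \<open>B \<noteq> {}\<close> by blast
  then show "(SUP x\<in>A. f x) \<le> (SUP y\<in>B. h y)"
    using bounded dominated by (rule cSUP_mono)
  obtain M where M: "\<And>y. y \<in> B \<Longrightarrow> h y \<le> M"
    using bounded by (auto simp: bdd_above_def)
  have "bdd_above (f ` A)"
  proof (rule bdd_aboveI2)
    fix x assume "x \<in> A"
    then obtain y where "y \<in> B" and "f x \<le> h y" using dominated by blast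
    then show "f x \<le> M" using M order_trans by blast
  qed
  moreover have "\<exists>x\<in>A. h y \<le> f x" if "y \<in> B" for y
    using that embed agree by (intro bexI[of _ "g y"]) auto
  ultimately show "(SUP y\<in>B. h y) \<le> (SUP x\<in>A. f x)"
    using \<open>B \<noteq> {}\<close> by (intro cSUP_mono)
qed

lemma feasible2_nonempty: "feasible2 \<noteq> {}"
proof -
  have "(\<lambda>i. if i = undefined then 1 else 0) \<in> feasible2"
    by (simp add: feasible2_def)
  then show ?thesis by blast
qed

lemma obj2_le:
  assumes "s \<in> feasible2" and "0 \<le> p"
  shows "obj2 r p s \<le> (\<Sum>i\<in>UNIV. \<bar>r i\<bar>) + p"
proof -
  have nonneg: "0 \<le> s i" for i
    using assms(1) by (simp add: feasible2_def)
  have sum: "(\<Sum>i\<in>UNIV. s i) = 1"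
    using assms(1) by (simp add: feasible2_def)
  have "s i \<le> 1" for i
    using member_le_sum[of i UNIV s] nonneg sum by simp
  then have "r i * s i \<le> \<bar>r i\<bar>" for i
    using nonneg[of i] by (metis abs_ge_self abs_mult abs_of_nonneg mult_left_le
        abs_ge_zero order_trans)
  then have "(\<Sum>i\<in>UNIV. r i * s i) \<le> (\<Sum>i\<in>UNIV. \<bar>r i\<bar>)" by (rule sum_mono)
  moreover have "p * sqrt (1 - (\<Sum>i\<in>UNIV. (s i)\<^sup>2)) \<le> p"
    using assms(2) sum_nonneg[of UNIV "\<lambda>i. (s i)\<^sup>2"] by (simp add: mult_left_le)
  ultimately show ?thesis unfolding obj2_def by simp
qed

lemma bdd_above_obj2: "0 \<le> p \<Longrightarrow> bdd_above (obj2 r p ` feasible2)"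
  using obj2_le by (auto simp: bdd_above_def)

theorem lemma1:
  fixes \<rho> :: "complex^'n::finite^'n" and r :: "'n \<Rightarrow> real"
    and b :: "'n \<Rightarrow> complex^'n" and p :: real
  assumes "0 \<le> p"
    and "density_op \<rho>"
    and "orthonormal_basis b"
    and "\<rho> = (\<Sum>i\<in>UNIV. r i *\<^sub>R outer (b i) (b i))"
  shows "(SUP \<sigma>\<in>{\<sigma>. density_op \<sigma>}. obj1 \<rho> p \<sigma>) = (SUP s\<in>feasible2. obj2 r p s)
    \<and> bij_betw (diag_op b) feasible2 {\<sigma>. density_op \<sigma> \<and> diag_in_basis b \<sigma>}
    \<and> (\<forall>s\<in>feasible2. obj1 \<rho> p (diag_op b s) = obj2 r p s)
    \<and> (\<forall>\<sigma>. density_op \<sigma> \<longrightarrow>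
           (\<exists>s\<in>feasible2. obj1 \<rho> p (diag_op b s) \<ge> obj1 \<rho> p \<sigma>))"
proof -
  have \<rho>: "\<rho> = diag_op b r" by (simp add: assms(4) diag_op_def)
  have agree: "obj1 \<rho> p (diag_op b s) = obj2 r p s" for s
    by (simp add: \<rho> obj1_diag_op[OF assms(3)])
  have bij: "bij_betw (diag_op b) feasible2 {\<sigma>. density_op \<sigma> \<and> diag_in_basis b \<sigma>}"
    by (rule bij_betw_diag_op[OF assms(3)])
  have dominated: "\<exists>s\<in>feasible2. obj1 \<rho> p \<sigma> \<le> obj2 r p s" if "density_op \<sigma>" for \<sigma>
    unfolding \<rho> by (rule obj1_diag_op_dominates[OF assms(3) that assms(1)])
  have "diag_op b ` feasible2 \<subseteq> {\<sigma>. density_op \<sigma>}"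
    using bij by (auto simp: bij_betw_def)
  then have "(SUP \<sigma>\<in>{\<sigma>. density_op \<sigma>}. obj1 \<rho> p \<sigma>) = (SUP s\<in>feasible2. obj2 r p s)"
    by (rule cSUP_eq_if_dominated)
       (use agree dominated feasible2_nonempty bdd_above_obj2[OF assms(1), of r] in auto)
  then show ?thesis
    using bij dominated by (simp add: agree)
qed

end
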